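(* For every $\rho>-1$, the function $C\mapsto F^{\rm bsc}(\rho;C)$ is concave on $[0,1]$. It is non-decreasing in $C$ for $-1<\rho\le0$ and non-increasing in $C$ for $\rho\ge0$.
   Context: Logarithms are base 2. Let $h(p)=-p\log p-(1-p)\log(1-p)$ be the binary entropy function and let $h^{-1}$ be its inverse on $[0,\tfrac12]$. For $C\in[0,1]$ and $\rho>-1$ define $$F^{\rm bsc}(\rho;C)=2^{-\rho}\Bigl(\varepsilon^{1/(1+\rho)}+(1-\varepsilon)^{1/(1+\rho)}\Bigr)^{1+\rho},\qquad \varepsilon=h^{-1}(1-C).$$ *)

theory Defs
  imports "HOL-Analysis.Analysis"
begin

definition bin_entropy :: "real \<Rightarrow> real" where
  "bin_entropy p = (if p = 0 \<or> p = 1 then 0 else - p * log 2 p - (1 - p) * log 2 (1 - p))"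

definition bin_entropy_inv :: "real \<Rightarrow> real" where
  "bin_entropy_inv y = (THE p. p \<in> {0..1/2} \<and> bin_entropy p = y)"

definition F_bsc :: "real \<Rightarrow> real \<Rightarrow> real" where
  "F_bsc \<rho> C = (let \<epsilon> = bin_entropy_inv (1 - C) in
     2 powr (-\<rho>) * (\<epsilon> powr (1 / (1 + \<rho>)) + (1 - \<epsilon>) powr (1 / (1 + \<rho>))) powr (1 + \<rho>))"

end

theory Submission
  imports Defs "HOL-Real_Asymp.Real_Asymp"
begin

(* Concavity and monotonicity of the BSC function F(rho; C) = G(eps(C)), where
   G(e) = 2^(-rho) (e^(1/(1+rho)) + (1-e)^(1/(1+rho)))^(1+rho) and eps(C) = h^-1(1 - C).

   Since h(eps(C)) = 1 - C, the Cauchy mean value theorem applied to G and h on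
   [eps(C2), eps(C1)] writes every secant slope of F as -G'(xi)/h'(xi) for some xi strictly
   between eps(C2) and eps(C1).  In terms of the log-odds s = ln((1-xi)/xi) this ratio equals
   2^(-rho) ln 2 psi(s) with
       psi(s) = (1 + exp(-s/(1+rho)))^rho (1 - exp(rho s/(1+rho))) / s.
   Two facts about psi finish the proof: psi is non-increasing on (0, oo) (an elementary
   exponential inequality shows psi' <= 0), and its sign is the sign of -rho.  As C grows,
   eps(C) decreases, so xi decreases, s grows and the secant slopes decrease: F is concave.
   The sign of psi gives the direction of monotonicity. *)

section \<open>Binary entropy and its inverse\<close>

lemma bin_entropy_ln:
  assumes "0 < p" "p < 1"
  shows "bin_entropy p = (- p * ln p - (1 - p) * ln (1 - p)) / ln 2"
  using assms by (simp add: bin_entropy_def log_def field_simps)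

text \<open>The log-odds of a probability; it is the derivative of the entropy in nats.\<close>
definition log_odds :: "real \<Rightarrow> real" where
  "log_odds p = ln (1 - p) - ln p"

lemma log_odds_pos: "0 < p \<Longrightarrow> p < 1/2 \<Longrightarrow> log_odds p > 0"
  by (simp add: log_odds_def)

lemma log_odds_antimono:
  assumes "0 < p" "p \<le> q" "q < 1"
  shows "log_odds q \<le> log_odds p"
proof -
  have "ln p \<le> ln q" "ln (1 - q) \<le> ln (1 - p)" using assms by simp_all
  then show ?thesis by (simp add: log_odds_def)
qed

lemma bin_entropy_has_derivative:
  assumes "0 < p" "p < 1"
  shows "(bin_entropy has_real_derivative log_odds p / ln 2) (at p)"
proof -
  let ?h = "\<lambda>x::real. (- x * ln x - (1 - x) * ln (1 - x)) / ln 2"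
  have deriv: "(?h has_real_derivative log_odds p / ln 2) (at p)"
    using assms by (auto intro!: derivative_eq_intros simp: log_odds_def)
  have "\<forall>\<^sub>F x in nhds p. ?h x = bin_entropy x"
    using eventually_nhds_in_open[of "{0<..<1}" p] assms
    by (auto elim!: eventually_mono simp: bin_entropy_ln)
  from DERIV_cong_ev[OF refl this refl] deriv show ?thesis by blast
qed

text \<open>Continuity at the endpoints comes from the limit \<open>x ln x \<rightarrow> 0\<close>, which \<open>real_asymp\<close>
  establishes.\<close>
lemma continuous_on_bin_entropy: "continuous_on {0..1} bin_entropy"
  unfolding continuous_on_eq_continuous_within
proof
  fix p :: real assume p: "p \<in> {0..1}"
  let ?h = "\<lambda>x::real. (- x * ln x - (1 - x) * ln (1 - x)) / ln 2"
  consider "p = 0" | "p = 1" | "0 < p" "p < 1" using p by fastforce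
  then show "continuous (at p within {0..1}) bin_entropy"
  proof cases
    case 1
    have lim: "(?h \<longlongrightarrow> 0) (at_right 0)" by real_asymp
    have ev: "\<forall>\<^sub>F x in at_right 0. ?h x = bin_entropy x"
      using eventually_at_right_real[of 0 1] by (auto elim!: eventually_mono simp: bin_entropy_ln)
    from lim have "(bin_entropy \<longlongrightarrow> 0) (at_right 0)" by (rule tendsto_cong[THEN iffD1, OF ev])
    moreover have "bin_entropy 0 = 0" by (simp add: bin_entropy_def)
    ultimately show ?thesis
      using 1 by (simp add: continuous_within at_within_Icc_at_right)
  next
    case 2
    have lim: "(?h \<longlongrightarrow> 0) (at_left 1)" by real_asymp
    have ev: "\<forall>\<^sub>F x in at_left 1. ?h x = bin_entropy x"
      using eventually_at_left_real[of 0 1] by (auto elim!: eventually_mono simp: bin_entropy_ln)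
    from lim have "(bin_entropy \<longlongrightarrow> 0) (at_left 1)" by (rule tendsto_cong[THEN iffD1, OF ev])
    moreover have "bin_entropy 1 = 0" by (simp add: bin_entropy_def)
    ultimately show ?thesis
      using 2 by (simp add: continuous_within at_within_Icc_at_left)
  next
    case 3
    then have "isCont bin_entropy p" by (intro DERIV_isCont[OF bin_entropy_has_derivative])
    then show ?thesis by (rule continuous_at_imp_continuous_at_within)
  qed
qed

lemma bin_entropy_strict_mono: "strict_mono_on {0..1/2} bin_entropy"
proof (rule strict_mono_onI)
  fix x y :: real assume xy: "x \<in> {0..1/2}" "y \<in> {0..1/2}" "x < y"
  show "bin_entropy x < bin_entropy y"
  proof (rule DERIV_pos_imp_increasing_open[OF \<open>x < y\<close>])
    fix z assume "x < z" "z < y"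
    then show "\<exists>d. (bin_entropy has_real_derivative d) (at z) \<and> 0 < d"
      using xy bin_entropy_has_derivative[of z] log_odds_pos[of z] by auto
  next
    show "continuous_on {x..y} bin_entropy"
      using xy by (auto intro: continuous_on_subset[OF continuous_on_bin_entropy])
  qed
qed

text \<open>The inverse entropy is well defined on \<open>[0,1]\<close>: existence by the intermediate value
  theorem, uniqueness by strict monotonicity.\<close>
lemma bin_entropy_inv:
  assumes "0 \<le> y" "y \<le> 1"
  shows "bin_entropy_inv y \<in> {0..1/2}" "bin_entropy (bin_entropy_inv y) = y"
proof -
  have "bin_entropy 0 = 0" "bin_entropy (1/2) = 1"
    by (simp_all add: bin_entropy_def log_divide)
  then obtain p where p: "p \<in> {0..1/2}" "bin_entropy p = y"
    using IVT'[of bin_entropy 0 y "1/2"] assms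
      continuous_on_subset[OF continuous_on_bin_entropy, of "{0..1/2}"] by auto
  have "bin_entropy_inv y = p"
    unfolding bin_entropy_inv_def
    by (rule the_equality) (use p strict_mono_on_eqD[OF bin_entropy_strict_mono] in auto)
  with p show "bin_entropy_inv y \<in> {0..1/2}" "bin_entropy (bin_entropy_inv y) = y" by auto
qed

lemma bin_entropy_inv_strict_mono: "strict_mono_on {0..1} bin_entropy_inv"
proof (rule strict_mono_onI)
  fix x y :: real assume "x \<in> {0..1}" "y \<in> {0..1}" "x < y"
  then have "bin_entropy_inv x \<in> {0..1/2}" "bin_entropy_inv y \<in> {0..1/2}"
    and "bin_entropy (bin_entropy_inv x) < bin_entropy (bin_entropy_inv y)"
    using bin_entropy_inv[of x] bin_entropy_inv[of y] by simp_all
  then show "bin_entropy_inv x < bin_entropy_inv y"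
    using strict_mono_on_less[OF bin_entropy_strict_mono] by blast
qed

text \<open>Cauchy's mean value theorem for functions that are only continuous on the closed interval
  (the library versions ask for continuity at the endpoints as points of the real line).\<close>
lemma cauchy_mean_value_theorem:
  fixes f g f' g' :: "real \<Rightarrow> real"
  assumes "a < b" "continuous_on {a..b} f" "continuous_on {a..b} g"
    and "\<And>x. a < x \<Longrightarrow> x < b \<Longrightarrow> (f has_real_derivative f' x) (at x)"
    and "\<And>x. a < x \<Longrightarrow> x < b \<Longrightarrow> (g has_real_derivative g' x) (at x)"
  shows "\<exists>x. a < x \<and> x < b \<and> (f b - f a) * g' x = (g b - g a) * f' x"
proof -
  define h where "h x = (f b - f a) * g x - (g b - g a) * f x" for x
  define D where "D x = (f b - f a) * g' x - (g b - g a) * f' x" for x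
  have "continuous_on {a..b} h" unfolding h_def using assms by (intro continuous_intros)
  moreover have "(h has_derivative (\<lambda>t. D x * t)) (at x)" if "a < x" "x < b" for x
    using assms(4,5)[OF that] unfolding h_def D_def has_field_derivative_def [symmetric]
    by (auto intro!: derivative_eq_intros)
  ultimately obtain x where "a < x" "x < b" "h b - h a = D x * (b - a)"
    using mvt[OF \<open>a < b\<close>, of h "\<lambda>x t. D x * t"] by blast
  moreover have "h b - h a = 0" by (simp add: h_def algebra_simps)
  ultimately show ?thesis using \<open>a < b\<close> by (auto simp: D_def)
qed

lemma concave_on_Icc_if_slopes_decrease:
  fixes f :: "real \<Rightarrow> real"
  assumes slopes: "\<And>x y z. a \<le> x \<Longrightarrow> x < y \<Longrightarrow> y < z \<Longrightarrow> z \<le> b \<Longrightarrow>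
      (f z - f y) / (z - y) \<le> (f y - f x) / (y - x)"
  shows "concave_on {a..b} f"
proof (rule concave_on_linorderI)
  fix t x z :: real assume t: "0 < t" "t < 1" and xz: "x \<in> {a..b}" "z \<in> {a..b}" "x < z"
  define y where "y = (1 - t) * x + t * z"
  have yx: "y - x = t * (z - x)" and zy: "z - y = (1 - t) * (z - x)"
    by (simp_all add: y_def algebra_simps)
  have "0 < y - x" "0 < z - y" unfolding yx zy using t xz by simp_all
  then have "x < y" "y < z" by simp_all
  then have "(f z - f y) / (z - y) \<le> (f y - f x) / (y - x)"
    using slopes[of x y z] xz by auto
  then have "(f z - f y) / ((1 - t) * (z - x)) \<le> (f y - f x) / (t * (z - x))"
    by (simp only: yx zy)
  moreover have "t * A \<le> (1 - t) * B" if "A / ((1 - t) * d) \<le> B / (t * d)" "0 < d" for A B d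
  proof -
    have "d * (t * A) \<le> d * ((1 - t) * B)" using that t by (simp add: field_simps)
    then show ?thesis using \<open>0 < d\<close> by simp
  qed
  ultimately have "t * (f z - f y) \<le> (1 - t) * (f y - f x)"
    using xz by simp
  then show "(1 - t) * f x + t * f z \<le> f ((1 - t) *\<^sub>R x + t *\<^sub>R z)"
    by (simp add: y_def algebra_simps)
qed (simp add: convex_real_interval)

section \<open>The auxiliary function psi\<close>

lemma sinh_lower_bound:
  fixes y :: real
  assumes "0 \<le> y"
  shows "2 * y \<le> exp y - exp (- y)"
proof -
  define f where "f t = exp t - exp (- t) - 2 * t" for t :: real
  have "f 0 \<le> f y"
  proof (rule DERIV_nonneg_imp_increasing_open[OF assms])
    fix t :: real
    have "0 \<le> (exp t - 1)\<^sup>2 / exp t" by simp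
    also have "(exp t - 1)\<^sup>2 / exp t = exp t + exp (- t) - 2"
      by (simp add: exp_minus field_simps power2_eq_square)
    finally have "0 \<le> exp t + exp (- t) - 2" .
    moreover have "(f has_real_derivative exp t + exp (- t) - 2) (at t)"
      unfolding f_def by (auto intro!: derivative_eq_intros)
    ultimately show "\<exists>d. (f has_real_derivative d) (at t) \<and> 0 \<le> d" by blast
  qed (simp add: f_def continuous_intros)
  then show ?thesis by (simp add: f_def)
qed

lemma exp_lower_bound_nonpos:
  fixes y :: real
  assumes "y \<le> 0"
  shows "2 + y \<le> (2 - y) * exp y"
proof -
  define m where "m t = (2 - t) * exp t - 2 - t" for t :: real
  have "m 0 \<le> m y"
  proof (rule DERIV_nonpos_imp_decreasing_open[OF assms])
    fix t :: real assume "y < t" "t < 0"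
    have "(1 - t) * exp t \<le> exp (- t) * exp t"
      using exp_ge_add_one_self[of "- t"] by (intro mult_right_mono) auto
    then have "(1 - t) * exp t - 1 \<le> 0" by (simp add: exp_minus)
    moreover have "(m has_real_derivative (1 - t) * exp t - 1) (at t)"
      unfolding m_def by (auto intro!: derivative_eq_intros simp: algebra_simps)
    ultimately show "\<exists>d. (m has_real_derivative d) (at t) \<and> d \<le> 0" by blast
  qed (simp add: m_def continuous_intros)
  then show ?thesis by (simp add: m_def)
qed

text \<open>The inequality behind \<open>psi' \<le> 0\<close>: for \<open>s > 0\<close> and \<open>b > -1\<close>, with \<open>y = b s\<close>,
  \<open>y (e^y - 1) / (1 + e^(s + y)) \<le> e^y - 1 - y\<close>.  For \<open>y \<ge> 0\<close> bound the denominator below by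
  \<open>1 + e^y\<close>, for \<open>y < 0\<close> by 2 (as \<open>s + y = (1 + b) s > 0\<close>).\<close>
lemma key_exp_inequality:
  fixes s b :: real
  assumes "0 < s" "-1 < b"
  shows "b * s * (exp (b * s) - 1) / (1 + exp ((1 + b) * s)) \<le> exp (b * s) - 1 - b * s"
proof -
  define y where "y = b * s"
  define Y where "Y = exp y"
  have W: "exp ((1 + b) * s) = exp (s + y)" by (simp add: y_def algebra_simps)
  have "Y > 0" by (simp add: Y_def)
  have num: "0 \<le> y * (Y - 1)"
    by (cases "y \<ge> 0") (auto simp: Y_def mult_nonpos_nonpos)
  show ?thesis
    unfolding W y_def [symmetric] Y_def [symmetric]
  proof (cases "y \<ge> 0")
    case True
    have "Y \<le> exp (s + y)" unfolding Y_def using \<open>0 < s\<close> by simp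
    then have "y * (Y - 1) / (1 + exp (s + y)) \<le> y * (Y - 1) / (1 + Y)"
      using num \<open>Y > 0\<close> by (intro divide_left_mono) auto
    also have "\<dots> \<le> Y - 1 - y"
    proof -
      have "2 * y \<le> Y - 1 / Y"
        using sinh_lower_bound[OF True] by (simp add: Y_def exp_minus inverse_eq_divide)
      then have "y * (Y - 1) \<le> (Y - 1 - y) * (1 + Y)"
        using \<open>Y > 0\<close> by (simp add: field_simps)
      then show ?thesis using \<open>Y > 0\<close> by (simp add: divide_le_eq)
    qed
    finally show "y * (Y - 1) / (1 + exp (s + y)) \<le> Y - 1 - y" .
  next
    case False
    have "s + y = (1 + b) * s" by (simp add: y_def algebra_simps)
    then have "1 \<le> exp (s + y)" using assms by simp
    then have "y * (Y - 1) / (1 + exp (s + y)) \<le> y * (Y - 1) / 2"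
      using num by (intro divide_left_mono) (auto intro: add_pos_pos)
    also have "\<dots> \<le> Y - 1 - y"
      using exp_lower_bound_nonpos[of y] False by (simp add: Y_def field_simps)
    finally show "y * (Y - 1) / (1 + exp (s + y)) \<le> Y - 1 - y" .
  qed
qed

text \<open>\<open>psi r s\<close> is the ratio \<open>-G'/h'\<close> of the derivatives of kernel and entropy, up to the
  constant \<open>2^(-r) ln 2\<close>, written as a function of the log-odds \<open>s\<close>.\<close>
definition psi :: "real \<Rightarrow> real \<Rightarrow> real" where
  "psi r s = (1 + exp (- s / (1 + r))) powr r * ((1 - exp (r / (1 + r) * s)) / s)"

lemma psi_has_derivative:
  fixes r s :: real
  assumes "r > -1" "s > 0"
  defines "q \<equiv> r / (1 + r)" and "E \<equiv> exp (- s / (1 + r))" and "Y \<equiv> exp (r / (1 + r) * s)"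
  shows "(psi r has_real_derivative
     (1 + E) powr r * (- q * s * (1 - Y) * E / (1 + E) - q * s * Y - (1 - Y)) / s\<^sup>2) (at s)"
proof -
  have E: "1 + E > 0" by (simp add: E_def add_pos_pos)
  have Yq: "Y = exp (q * s)" unfolding Y_def q_def ..
  have "((\<lambda>s. (1 + exp (- s / (1 + r))) powr r) has_real_derivative
      r * (1 + E) powr (r - 1) * (- E / (1 + r))) (at s)"
    using assms(1) E unfolding E_def by (auto intro!: derivative_eq_intros)
  also have "r * (1 + E) powr (r - 1) * (- E / (1 + r)) = (1 + E) powr r * (- q * E / (1 + E))"
    using E by (simp add: q_def powr_diff field_simps)
  finally have dP: "((\<lambda>s. (1 + exp (- s / (1 + r))) powr r) has_real_derivative \<dots>) (at s)" .
  have dQ: "((\<lambda>s. (1 - exp (q * s)) / s) has_real_derivative (- q * s * Y - (1 - Y)) / s\<^sup>2) (at s)"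
    using assms(2) unfolding Yq by (auto intro!: derivative_eq_intros simp: power2_eq_square field_simps)
  have "psi r = (\<lambda>s. (1 + exp (- s / (1 + r))) powr r * ((1 - exp (q * s)) / s))"
    unfolding psi_def q_def ..
  then have "(psi r has_real_derivative (1 + E) powr r * (- q * E / (1 + E)) * ((1 - Y) / s)
      + (- q * s * Y - (1 - Y)) / s\<^sup>2 * (1 + E) powr r) (at s)"
    using DERIV_mult[OF dP dQ] unfolding E_def Yq by simp
  moreover have "(1 + E) powr r * (- q * E / (1 + E)) * ((1 - Y) / s)
      + (- q * s * Y - (1 - Y)) / s\<^sup>2 * (1 + E) powr r
      = (1 + E) powr r * (- q * s * (1 - Y) * E / (1 + E) - q * s * Y - (1 - Y)) / s\<^sup>2"
    using assms(2) E by (simp add: power2_eq_square divide_simps) (simp add: algebra_simps)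
  ultimately show ?thesis by simp
qed

text \<open>This derivative is non-positive: multiplying the bracket by \<open>exp(-q s)\<close> turns it into
  the two sides of the key inequality with \<open>b = -q > -1\<close>.\<close>
lemma psi_derivative_nonpos:
  fixes r s :: real
  assumes "r > -1" "s > 0"
  defines "q \<equiv> r / (1 + r)" and "E \<equiv> exp (- s / (1 + r))" and "Y \<equiv> exp (r / (1 + r) * s)"
  shows "(1 + E) powr r * (- q * s * (1 - Y) * E / (1 + E) - q * s * Y - (1 - Y)) / s\<^sup>2 \<le> 0"
proof -
  define b where "b = - q"
  define Z where "Z = exp (b * s)"
  have "1 + r > 0" using assms(1) by simp
  then have "-1 < b" by (simp add: b_def q_def field_simps)
  have "Z > 0" "E > 0" by (simp_all add: Z_def E_def)
  have Y: "Y = 1 / Z" by (simp add: Y_def Z_def b_def q_def exp_minus inverse_eq_divide)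
  have "(1 + b) * s = s / (1 + r)" using \<open>1 + r > 0\<close> by (simp add: b_def q_def field_simps)
  then have EW: "E / (1 + E) = 1 / (1 + exp ((1 + b) * s))"
    by (simp add: E_def exp_minus field_simps add_pos_pos)
  have "- q * s * (1 - Y) * E / (1 + E) - q * s * Y - (1 - Y)
      = (b * s * (Z - 1) * (E / (1 + E)) + b * s - (Z - 1)) / Z"
    using \<open>Z > 0\<close> \<open>E > 0\<close> unfolding Y b_def
    by (simp add: divide_simps)
  also have "\<dots> = (b * s * (Z - 1) / (1 + exp ((1 + b) * s)) - (Z - 1 - b * s)) / Z"
    unfolding EW by simp
  also have "\<dots> \<le> 0"
    using key_exp_inequality[OF \<open>s > 0\<close> \<open>-1 < b\<close>] \<open>Z > 0\<close>
    unfolding Z_def by (simp add: divide_nonpos_pos)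
  finally have "- q * s * (1 - Y) * E / (1 + E) - q * s * Y - (1 - Y) \<le> 0" .
  then show ?thesis
    using \<open>s > 0\<close> by (intro divide_nonpos_pos mult_nonneg_nonpos) auto
qed

lemma psi_antimono:
  assumes "r > -1" "0 < s1" "s1 \<le> s2"
  shows "psi r s2 \<le> psi r s1"
proof (rule DERIV_nonpos_imp_decreasing_open[OF \<open>s1 \<le> s2\<close>])
  fix s assume "s1 < s" "s < s2"
  then show "\<exists>d. (psi r has_real_derivative d) (at s) \<and> d \<le> 0"
    using psi_has_derivative[OF \<open>r > -1\<close>, of s] psi_derivative_nonpos[OF \<open>r > -1\<close>, of s]
      \<open>0 < s1\<close> by auto
next
  show "continuous_on {s1..s2} (psi r)"
  proof (rule DERIV_atLeastAtMost_imp_continuous_on)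
    fix s assume "s1 \<le> s" "s \<le> s2"
    then have "s > 0" using \<open>0 < s1\<close> by simp
    then show "\<exists>d. (psi r has_real_derivative d) (at s)"
      using psi_has_derivative[OF \<open>r > -1\<close>] by blast
  qed
qed

lemma psi_sign:
  assumes "r > -1" "s > 0"
  shows "r \<le> 0 \<Longrightarrow> 0 \<le> psi r s" and "0 \<le> r \<Longrightarrow> psi r s \<le> 0"
proof -
  have "1 + r > 0" using assms(1) by simp
  have P: "0 \<le> (1 + exp (- s / (1 + r))) powr r" by simp
  show "0 \<le> psi r s" if "r \<le> 0"
  proof -
    have "r / (1 + r) * s \<le> 0"
      using that \<open>1 + r > 0\<close> \<open>s > 0\<close> by (simp add: mult_le_0_iff divide_le_0_iff)
    then have "0 \<le> (1 - exp (r / (1 + r) * s)) / s" using \<open>s > 0\<close> by simp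
    with P show ?thesis unfolding psi_def by (rule mult_nonneg_nonneg)
  qed
  show "psi r s \<le> 0" if "0 \<le> r"
  proof -
    have "0 \<le> r / (1 + r) * s" using that \<open>1 + r > 0\<close> \<open>s > 0\<close> by simp
    then have "(1 - exp (r / (1 + r) * s)) / s \<le> 0" using \<open>s > 0\<close> by (simp add: divide_nonpos_pos)
    with P show ?thesis unfolding psi_def by (rule mult_nonneg_nonpos)
  qed
qed

section \<open>The kernel of F_bsc\<close>

definition bsc_kernel :: "real \<Rightarrow> real \<Rightarrow> real" where
  "bsc_kernel r e = 2 powr (-r) * (e powr (1/(1+r)) + (1-e) powr (1/(1+r))) powr (1+r)"

lemma F_bsc_eq_kernel: "F_bsc r C = bsc_kernel r (bin_entropy_inv (1 - C))"
  by (simp add: F_bsc_def bsc_kernel_def Let_def)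

text \<open>The kernel is continuous on \<open>[0,1]\<close>: the power sum inside never vanishes there.\<close>
lemma continuous_on_bsc_kernel:
  assumes "r > -1"
  shows "continuous_on {0..1} (bsc_kernel r)"
proof -
  define a where "a = 1/(1+r)"
  have "a > 0" using assms by (simp add: a_def)
  have c1: "continuous_on {0..1} (\<lambda>e::real. e powr a)"
    by (rule continuous_on_powr') (use \<open>a > 0\<close> in \<open>auto intro: continuous_intros\<close>)
  have c2: "continuous_on {0..1} (\<lambda>e::real. (1 - e) powr a)"
    by (rule continuous_on_powr') (use \<open>a > 0\<close> in \<open>auto intro: continuous_intros\<close>)
  have pos: "\<forall>e\<in>{0..1}. e powr a + (1 - e) powr a \<noteq> 0"
    using \<open>a > 0\<close> by (auto simp: add_nonneg_eq_0_iff)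
  show ?thesis unfolding bsc_kernel_def a_def [symmetric]
    by (intro continuous_intros c1 c2 continuous_on_powr pos)
qed

lemma bsc_kernel_has_derivative:
  assumes "r > -1" "0 < e" "e < 1"
  defines "a \<equiv> 1/(1+r)"
  shows "(bsc_kernel r has_real_derivative
    2 powr (-r) * (e powr a + (1-e) powr a) powr r * (e powr (a-1) - (1-e) powr (a-1))) (at e)"
proof -
  have "(1 + r) * a = 1" using assms(1) by (simp add: a_def)
  have "e powr a + (1-e) powr a > 0" using assms(2,3) by (simp add: add_pos_pos)
  then have "(bsc_kernel r has_real_derivative 2 powr (-r) *
      ((1+r) * (e powr a + (1-e) powr a) powr (1 + r - 1) * (a * e powr (a-1) - a * (1-e) powr (a-1)))) (at e)"
    unfolding bsc_kernel_def a_def [symmetric] using assms(2,3)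
    by (auto intro!: derivative_eq_intros)
  also have "2 powr (-r) * ((1+r) * (e powr a + (1-e) powr a) powr (1 + r - 1)
        * (a * e powr (a-1) - a * (1-e) powr (a-1)))
      = 2 powr (-r) * (e powr a + (1-e) powr a) powr r
        * (((1 + r) * a) * (e powr (a-1) - (1-e) powr (a-1)))"
    by (simp add: algebra_simps)
  finally show ?thesis unfolding \<open>(1 + r) * a = 1\<close> by simp
qed

text \<open>In terms of the odds \<open>t = e/(1-e) = exp(-s)\<close>, the derivative of the kernel factors
  through \<open>psi\<close> evaluated at the log-odds \<open>s\<close>.\<close>
lemma bsc_kernel_has_derivative_log_odds:
  assumes "r > -1" "0 < e" "e < 1/2"
  shows "(bsc_kernel r has_real_derivative - (2 powr (-r) * log_odds e * psi r (log_odds e))) (at e)"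
proof -
  define a where "a = 1/(1+r)"
  define s where "s = log_odds e"
  define t where "t = e / (1 - e)"
  define E where "E = exp (- s / (1 + r))"
  define Y where "Y = exp (r / (1 + r) * s)"
  have "1 + r > 0" using assms(1) by simp
  have "0 < t" "0 < 1 - e" using assms(2,3) by (simp_all add: t_def)
  have odds_power: "e powr c = (1 - e) powr c * t powr c" for c
  proof -
    have "e = (1 - e) * t" using \<open>0 < 1 - e\<close> by (simp add: t_def)
    then have "e powr c = ((1 - e) * t) powr c" by (rule arg_cong)
    then show ?thesis using \<open>0 < 1 - e\<close> \<open>0 < t\<close> by (simp add: powr_mult)
  qed
  have "ln t = - s" using assms(2,3) by (simp add: t_def s_def log_odds_def ln_div)
  then have tE: "t powr a = E" and tY: "t powr (a - 1) = Y"
    using \<open>0 < t\<close> \<open>1 + r > 0\<close> by (simp_all add: powr_def E_def Y_def a_def field_simps)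
  have "e powr a + (1-e) powr a = (1 - e) powr a * (1 + E)"
    by (simp add: odds_power tE algebra_simps)
  then have S: "(e powr a + (1-e) powr a) powr r = (1 - e) powr (a * r) * (1 + E) powr r"
    by (simp add: powr_mult powr_powr E_def add_pos_pos)
  have D: "e powr (a-1) - (1-e) powr (a-1) = - ((1 - e) powr (a - 1) * (1 - Y))"
    by (simp add: odds_power tY algebra_simps)
  have "(1 - e) powr (a * r) * (1 - e) powr (a - 1) = 1"
    using \<open>0 < 1 - e\<close> \<open>1 + r > 0\<close> by (simp add: powr_add [symmetric] a_def field_simps)
  then have "2 powr (-r) * (e powr a + (1-e) powr a) powr r * (e powr (a-1) - (1-e) powr (a-1))
      = - (2 powr (-r) * ((1 + E) powr r * (1 - Y)))"
    unfolding S D by (simp add: algebra_simps)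
  also have "(1 + E) powr r * (1 - Y) = s * psi r s"
    using log_odds_pos[OF assms(2,3)] by (simp add: psi_def E_def Y_def s_def)
  finally show ?thesis
    using bsc_kernel_has_derivative[OF assms(1,2)] assms(3) by (simp add: a_def s_def mult.assoc)
qed

section \<open>Secant slopes of \<open>F_bsc\<close>\<close>

text \<open>The ratio \<open>-G'(e)/h'(e)\<close>; every secant slope of \<open>F_bsc\<close> is one of its values.\<close>
definition bsc_slope :: "real \<Rightarrow> real \<Rightarrow> real" where
  "bsc_slope r e = 2 powr (-r) * ln 2 * psi r (log_odds e)"

text \<open>The slope grows with the point: log-odds decrease and \<open>psi\<close> is non-increasing.\<close>
lemma bsc_slope_mono:
  assumes "r > -1" "0 < e1" "e1 \<le> e2" "e2 < 1/2"
  shows "bsc_slope r e1 \<le> bsc_slope r e2"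
proof -
  have "psi r (log_odds e1) \<le> psi r (log_odds e2)"
    using assms by (intro psi_antimono log_odds_pos log_odds_antimono) auto
  then show ?thesis unfolding bsc_slope_def by (simp add: mult_left_mono)
qed

lemma bsc_slope_sign:
  assumes "r > -1" "0 < e" "e < 1/2"
  shows "r \<le> 0 \<Longrightarrow> 0 \<le> bsc_slope r e" and "0 \<le> r \<Longrightarrow> bsc_slope r e \<le> 0"
  using psi_sign[OF assms(1) log_odds_pos[OF assms(2,3)]]
  by (simp_all add: bsc_slope_def mult_nonneg_nonpos)

text \<open>Cauchy's mean value theorem for the kernel and the entropy on \<open>[eps(C2), eps(C1)]\<close>.\<close>
lemma F_bsc_secant:
  assumes "r > -1" "0 \<le> C1" "C1 < C2" "C2 \<le> 1"
  obtains \<xi> where "bin_entropy_inv (1 - C2) < \<xi>" "\<xi> < bin_entropy_inv (1 - C1)" "0 < \<xi>" "\<xi> < 1/2"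
    and "F_bsc r C2 - F_bsc r C1 = (C2 - C1) * bsc_slope r \<xi>"
proof -
  define e1 where "e1 = bin_entropy_inv (1 - C1)"
  define e2 where "e2 = bin_entropy_inv (1 - C2)"
  have e1: "e1 \<in> {0..1/2}" "bin_entropy e1 = 1 - C1"
    using bin_entropy_inv[of "1 - C1"] assms by (simp_all add: e1_def)
  have e2: "e2 \<in> {0..1/2}" "bin_entropy e2 = 1 - C2"
    using bin_entropy_inv[of "1 - C2"] assms by (simp_all add: e2_def)
  have "e2 < e1"
    using strict_mono_on_less[OF bin_entropy_inv_strict_mono, of "1 - C2" "1 - C1"] assms
    by (simp add: e1_def e2_def)
  have "{e2..e1} \<subseteq> {0..1}" using e1 e2 by auto
  obtain \<xi> where \<xi>: "e2 < \<xi>" "\<xi> < e1" and mvt: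
    "(bsc_kernel r e1 - bsc_kernel r e2) * (log_odds \<xi> / ln 2)
      = (bin_entropy e1 - bin_entropy e2) * - (2 powr (-r) * log_odds \<xi> * psi r (log_odds \<xi>))"
    using cauchy_mean_value_theorem[OF \<open>e2 < e1\<close>,
        of "bsc_kernel r" bin_entropy "\<lambda>x. - (2 powr (-r) * log_odds x * psi r (log_odds x))"
        "\<lambda>x. log_odds x / ln 2"]
      continuous_on_subset[OF continuous_on_bsc_kernel[OF assms(1)] \<open>{e2..e1} \<subseteq> {0..1}\<close>]
      continuous_on_subset[OF continuous_on_bin_entropy \<open>{e2..e1} \<subseteq> {0..1}\<close>]
      bsc_kernel_has_derivative_log_odds[OF assms(1)] bin_entropy_has_derivative e1 e2
    by force
  have "0 < \<xi>" "\<xi> < 1/2" using \<xi> e1 e2 by auto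
  then have "log_odds \<xi> > 0" by (rule log_odds_pos)
  moreover have "log_odds \<xi> * (bsc_kernel r e2 - bsc_kernel r e1)
      = log_odds \<xi> * ((C2 - C1) * bsc_slope r \<xi>)"
    using mvt e1 e2 by (simp add: bsc_slope_def field_simps)
  ultimately have "bsc_kernel r e2 - bsc_kernel r e1 = (C2 - C1) * bsc_slope r \<xi>"
    by simp
  then show ?thesis
    using that \<xi> \<open>0 < \<xi>\<close> \<open>\<xi> < 1/2\<close> by (simp add: F_bsc_eq_kernel e1_def e2_def)
qed

text \<open>The secant slopes of \<open>F_bsc\<close> decrease, because the mean-value points move left.\<close>
lemma F_bsc_slopes_decrease:
  assumes "r > -1" "0 \<le> x" "x < y" "y < z" "z \<le> 1"
  shows "(F_bsc r z - F_bsc r y) / (z - y) \<le> (F_bsc r y - F_bsc r x) / (y - x)"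
proof -
  obtain \<xi>1 where \<xi>1: "bin_entropy_inv (1 - y) < \<xi>1" "\<xi>1 < 1/2"
    and slope1: "F_bsc r y - F_bsc r x = (y - x) * bsc_slope r \<xi>1"
    using F_bsc_secant[OF assms(1,2,3)] assms(4,5) by auto
  obtain \<xi>2 where \<xi>2: "\<xi>2 < bin_entropy_inv (1 - y)" "0 < \<xi>2"
    and slope2: "F_bsc r z - F_bsc r y = (z - y) * bsc_slope r \<xi>2"
    using F_bsc_secant[OF assms(1) _ assms(4,5)] assms(2,3) by auto
  have "bsc_slope r \<xi>2 \<le> bsc_slope r \<xi>1"
    using \<xi>1 \<xi>2 by (intro bsc_slope_mono assms(1)) auto
  then show ?thesis using slope1 slope2 assms by simp
qed

lemma F_bsc_increment_sign:
  assumes "r > -1" "0 \<le> x" "x < y" "y \<le> 1"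
  shows "r \<le> 0 \<Longrightarrow> F_bsc r x \<le> F_bsc r y" and "0 \<le> r \<Longrightarrow> F_bsc r y \<le> F_bsc r x"
proof -
  obtain \<xi> where "0 < \<xi>" "\<xi> < 1/2" and slope: "F_bsc r y - F_bsc r x = (y - x) * bsc_slope r \<xi>"
    using F_bsc_secant[OF assms] by auto
  note sign = bsc_slope_sign[OF assms(1) \<open>0 < \<xi>\<close> \<open>\<xi> < 1/2\<close>]
  show "F_bsc r x \<le> F_bsc r y" if "r \<le> 0"
  proof -
    have "0 \<le> (y - x) * bsc_slope r \<xi>" using sign(1)[OF that] \<open>x < y\<close> by simp
    then show ?thesis using slope by simp
  qed
  show "F_bsc r y \<le> F_bsc r x" if "0 \<le> r"
  proof -
    have "(y - x) * bsc_slope r \<xi> \<le> 0" using sign(2)[OF that] \<open>x < y\<close> by (simp add: mult_nonneg_nonpos)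
    then show ?thesis using slope by simp
  qed
qed

theorem lemma1:
  fixes \<rho> :: real
  assumes "\<rho> > -1"
  shows "concave_on {0..1} (F_bsc \<rho>)
     \<and> (\<rho> \<le> 0 \<longrightarrow> mono_on {0..1} (F_bsc \<rho>))
     \<and> (\<rho> \<ge> 0 \<longrightarrow> antimono_on {0..1} (F_bsc \<rho>))"
proof (intro conjI impI)
  show "concave_on {0..1} (F_bsc \<rho>)"
    by (rule concave_on_Icc_if_slopes_decrease) (rule F_bsc_slopes_decrease[OF assms])
next
  assume "\<rho> \<le> 0"
  show "mono_on {0..1} (F_bsc \<rho>)"
  proof (rule mono_onI)
    fix x y :: real assume "x \<in> {0..1}" "y \<in> {0..1}" "x \<le> y"
    then show "F_bsc \<rho> x \<le> F_bsc \<rho> y"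
      using F_bsc_increment_sign(1)[OF assms _ _ _ \<open>\<rho> \<le> 0\<close>, of x y] by (cases "x = y") auto
  qed
next
  assume "\<rho> \<ge> 0"
  show "antimono_on {0..1} (F_bsc \<rho>)"
  proof (rule monotone_onI)
    fix x y :: real assume "x \<in> {0..1}" "y \<in> {0..1}" "x \<le> y"
    then show "F_bsc \<rho> y \<le> F_bsc \<rho> x"
      using F_bsc_increment_sign(2)[OF assms _ _ _ \<open>\<rho> \<ge> 0\<close>, of x y] by (cases "x = y") auto
  qed
qed

end
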